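(* Let $\mu\in(0,1)$ and let $\beta:[0,\infty)\to(0,\infty)$ be positive, bounded, non-increasing with $\lim_{a\to\infty}a\beta(a)=\mu$. Let $B(a)=\int_0^a\beta(s)\,ds$ and $W(\tau,b)=C(\tau)e^{-B(e^{\tau}b)}(1-b)^{\mu-1}$ for $\tau\ge0$, $b\in[0,1)$, with $C(\tau)>0$ such that $\int_0^1W(\tau,b)\,db=1$. Then for every $\eta$ with $0<\eta<\min(\mu,1-\mu)$ there exists a constant $C_\eta>0$ (depending on $\beta$ but not on $\tau$) such that for all $\tau\ge0$ and $b\in[0,1)$, $$W(\tau,b)\le C_\eta\frac{(1-b)^{\mu-1}(e^{-\tau}+b)^{-(\mu+\eta)}}{\int_b^1(1-b')^{\mu-1}(e^{-\tau}+b')^{-(\mu+\eta)}db'}.$$ *)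

theory Defs
  imports "HOL-Analysis.Analysis"
begin

definition Bint :: "(real \<Rightarrow> real) \<Rightarrow> real \<Rightarrow> real" where
  "Bint \<beta> a = integral {0..a} \<beta>"

definition Wfun :: "(real \<Rightarrow> real) \<Rightarrow> real \<Rightarrow> (real \<Rightarrow> real) \<Rightarrow> real \<Rightarrow> real \<Rightarrow> real" where
  "Wfun \<beta> \<mu> C \<tau> b = C \<tau> * exp (- Bint \<beta> (exp \<tau> * b)) * (1 - b) powr (\<mu> - 1)"

end

theory Submission
  imports Defs
begin

text \<open>Since \<open>\<integral>\<^sub>0\<^sup>1 W = 1\<close> and \<open>W \<ge> C(\<tau>) exp(-B(e\<^sup>\<tau>))\<close>, one gets
  \<open>C(\<tau>) \<le> exp(B(e\<^sup>\<tau>))\<close>, hence \<open>W(\<tau>,b) \<le> exp(B(e\<^sup>\<tau>) - B(e\<^sup>\<tau> b)) (1-b)\<^sup>\<mu>\<^sup>-\<^sup>1\<close>.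
  Because \<open>a \<beta>(a) \<rightarrow> \<mu> < p = \<mu> + \<eta>\<close>, eventually \<open>\<beta>(s) \<le> p/(s+1)\<close>, so the increment of \<open>B\<close>
  is at most a constant plus \<open>p log((e\<^sup>\<tau>+1)/(e\<^sup>\<tau> b+1)) \<le> p log(2/(e\<^sup>-\<^sup>\<tau>+b))\<close>, i.e.
  \<open>W(\<tau>,b) \<le> K (1-b)\<^sup>\<mu>\<^sup>-\<^sup>1 (e\<^sup>-\<^sup>\<tau>+b)\<^sup>-\<^sup>p\<close>. Finally the denominator of the claimed bound is
  positive and at most the Beta integral \<open>B(1-p, \<mu>)\<close>, uniformly in \<open>\<tau>\<close> and \<open>b\<close>.\<close>

definition weight :: "real \<Rightarrow> real \<Rightarrow> real \<Rightarrow> real \<Rightarrow> real" where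
  "weight \<mu> p \<epsilon> x = (1 - x) powr (\<mu> - 1) * (\<epsilon> + x) powr (-p)"

lemma integral_Ico_eq_Ioo:
  fixes f :: "real \<Rightarrow> real"
  shows "integral {a..<b} f = integral {a<..<b} f"
  by (rule integral_spike_set; rule negligible_subset[of "{a}"]) auto

lemma has_integral_Ico_iff_Icc:
  fixes f :: "real \<Rightarrow> real"
  shows "(f has_integral y) {a..<b} \<longleftrightarrow> (f has_integral y) {a..b}"
  by (rule has_integral_spike_set_eq; rule negligible_subset[of "{b}"]) auto

lemma weight_le_Beta_integrand:
  assumes "0 \<le> \<epsilon>" "0 < p" "0 < x" "x < 1"
  shows "weight \<mu> p \<epsilon> x \<le> x powr (-p) * (1 - x) powr (\<mu> - 1)"
proof -
  have "(\<epsilon> + x) powr (-p) \<le> x powr (-p)"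
    using assms by (intro powr_mono2') auto
  then show ?thesis
    unfolding weight_def by (simp add: mult.commute mult_right_mono)
qed

lemma weight_ge_const:
  assumes "\<mu> \<le> 1" "0 < p" "0 < \<epsilon>" "\<epsilon> \<le> 1" "0 \<le> x" "x < 1"
  shows "2 powr (-p) \<le> weight \<mu> p \<epsilon> x"
proof -
  have "1 \<le> (1 - x) powr (\<mu> - 1)"
    using powr_mono2'[of "\<mu> - 1" "1 - x" 1] assms by force
  moreover have "2 powr (-p) \<le> (\<epsilon> + x) powr (-p)"
    using assms by (intro powr_mono2') auto
  ultimately show ?thesis
    unfolding weight_def using mult_mono[of 1 _ "2 powr (-p)"] by force
qed

lemma weight_integrable_on:
  assumes "0 < \<mu>" "0 < p" "p < 1" "0 \<le> \<epsilon>" "0 \<le> b"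
  shows "weight \<mu> p \<epsilon> integrable_on {b<..<1}"
proof -
  define h where "h = (\<lambda>t::real. t powr (-p) * (1 - t) powr (\<mu> - 1))"
  have "(h has_integral Beta (1 - p) \<mu>) {0..1}"
    unfolding h_def using has_integral_Beta_real[of "1 - p" \<mu>] assms by simp
  then have "h integrable_on {b..1}"
    by (rule integrable_subinterval_real[OF has_integral_integrable]) (use assms in auto)
  then have h_int: "h integrable_on {b<..<1}"
    using integrable_on_Icc_iff_Ioo by blast
  have "continuous_on {b<..<1} (weight \<mu> p \<epsilon>)"
    unfolding weight_def using assms by (intro continuous_intros) auto
  then have meas: "weight \<mu> p \<epsilon> \<in> borel_measurable (lebesgue_on {b<..<1})"
    by (rule continuous_imp_measurable_on_sets_lebesgue) auto
  have bound: "\<bar>weight \<mu> p \<epsilon> x\<bar> \<le> h x" if "x \<in> {b<..<1}" for x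
    using that assms weight_le_Beta_integrand[of \<epsilon> p x \<mu>] by (simp add: weight_def h_def)
  show ?thesis
    by (rule measurable_bounded_by_integrable_imp_integrable_real[OF meas h_int bound]) auto
qed

lemma weight_integral_le_Beta:
  assumes "0 < \<mu>" "0 < p" "p < 1" "0 \<le> \<epsilon>" "0 \<le> b" "b < 1"
  shows "integral {b..<1} (weight \<mu> p \<epsilon>) \<le> Beta (1 - p) \<mu>"
proof -
  let ?h = "\<lambda>t::real. t powr (-p) * (1 - t) powr (\<mu> - 1)"
  have h: "(?h has_integral Beta (1 - p) \<mu>) {0..1}"
    using has_integral_Beta_real[of "1 - p" \<mu>] assms by simp
  then have h_int: "?h integrable_on {b..1}"
    by (rule integrable_subinterval_real[OF has_integral_integrable]) (use assms in auto)
  have "integral {b..<1} (weight \<mu> p \<epsilon>) \<le> integral {b<..<1} ?h"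
    unfolding integral_Ico_eq_Ioo
    using assms weight_le_Beta_integrand[of \<epsilon> p _ \<mu>] h_int
    by (intro integral_le weight_integrable_on) (auto simp: integrable_on_Icc_iff_Ioo[symmetric])
  also have "\<dots> = integral {b..1} ?h"
    by (simp add: integral_open_interval_real)
  also have "\<dots> \<le> Beta (1 - p) \<mu>"
    using assms by (intro has_integral_subset_le[OF _ integrable_integral[OF h_int] h]) auto
  finally show ?thesis .
qed

lemma weight_integral_pos:
  assumes "0 < \<mu>" "\<mu> \<le> 1" "0 < p" "p < 1" "0 < \<epsilon>" "\<epsilon> \<le> 1" "0 \<le> b" "b < 1"
  shows "0 < integral {b..<1} (weight \<mu> p \<epsilon>)"
proof -
  have "0 < (1 - b) * 2 powr (-p)"
    using assms by simp
  also have "\<dots> = integral {b<..<1} (\<lambda>x. 2 powr (-p))"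
    using assms by (simp add: integral_open_interval_real[symmetric])
  also have "\<dots> \<le> integral {b<..<1} (weight \<mu> p \<epsilon>)"
    using assms weight_ge_const[of \<mu> p \<epsilon>]
    by (intro integral_le weight_integrable_on) (auto simp: integrable_on_Icc_iff_Ioo[symmetric])
  finally show ?thesis
    by (simp add: integral_Ico_eq_Ioo)
qed

lemma Beta_real_pos:
  fixes a b :: real
  assumes "0 < a" "0 < b"
  shows "0 < Beta a b"
  using assms by (simp add: Beta_def Gamma_real_pos)

lemma integrable_on_antimono_on:
  fixes f :: "real \<Rightarrow> real"
  assumes "antimono_on {a..b} f"
  shows "f integrable_on {a..b}"
proof -
  have "mono_on {a..b} (\<lambda>x. - f x)"
    using assms by (auto simp: monotone_on_def)
  then show ?thesis
    using integrable_on_mono_on integrable_neg_iff by blast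
qed

lemma le_mult_divide_of_le:
  fixes a c d :: real
  assumes "0 \<le> a" "0 < c" "c \<le> d"
  shows "a \<le> d * a / c"
  using assms mult_left_mono[OF assms(3,1)] by (simp add: pos_le_divide_eq ac_simps)

lemma eventually_less_div_plus_one:
  fixes \<beta> :: "real \<Rightarrow> real"
  assumes "((\<lambda>a. a * \<beta> a) \<longlongrightarrow> \<mu>) at_top" "\<mu> < p"
  shows "\<forall>\<^sub>F s in at_top. \<beta> s < p / (s + 1)"
proof -
  have "((\<lambda>s. s * \<beta> s + s * \<beta> s * inverse s) \<longlongrightarrow> \<mu> + \<mu> * 0) at_top"
    by (intro tendsto_intros assms(1) tendsto_inverse_0_at_top filterlim_ident)
  moreover have "\<forall>\<^sub>F s in at_top. s * \<beta> s + s * \<beta> s * inverse s = (s + 1) * \<beta> s"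
    using eventually_gt_at_top[of 0] by eventually_elim (simp add: field_simps)
  ultimately have "((\<lambda>s. (s + 1) * \<beta> s) \<longlongrightarrow> \<mu>) at_top"
    using tendsto_cong by force
  then have "\<forall>\<^sub>F s in at_top. (s + 1) * \<beta> s < p"
    using assms(2) by (rule order_tendstoD)
  then show ?thesis
    using eventually_gt_at_top[of 0] by eventually_elim (simp add: field_simps)
qed

context
  fixes \<beta> :: "real \<Rightarrow> real"
  assumes noninc: "\<And>x y. 0 \<le> x \<Longrightarrow> x \<le> y \<Longrightarrow> \<beta> y \<le> \<beta> x"
begin

lemma noninc_integrable_on:
  assumes "0 \<le> u"
  shows "\<beta> integrable_on {u..v}"
  using assms noninc by (intro integrable_on_antimono_on) (auto simp: monotone_on_def)

lemma Bint_diff: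
  assumes "0 \<le> x" "x \<le> y"
  shows "Bint \<beta> y - Bint \<beta> x = integral {x..y} \<beta>"
proof -
  have "integral {0..x} \<beta> + integral {x..y} \<beta> = integral {0..y} \<beta>"
    using assms by (intro Henstock_Kurzweil_Integration.integral_combine noninc_integrable_on) auto
  then show ?thesis
    unfolding Bint_def by simp
qed

lemma Bint_mono:
  assumes "\<And>a. 0 \<le> a \<Longrightarrow> 0 \<le> \<beta> a" "0 \<le> x" "x \<le> y"
  shows "Bint \<beta> x \<le> Bint \<beta> y"
proof -
  have "0 \<le> integral {x..y} \<beta>"
    using assms by (intro integral_nonneg noninc_integrable_on) auto
  then show ?thesis
    using Bint_diff[OF assms(2,3)] by simp
qed

lemma integral_le_ln_diff:
  assumes "\<And>s. s \<in> {u..v} \<Longrightarrow> \<beta> s \<le> p / (s + 1)" "0 \<le> u" "u \<le> v"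
  shows "integral {u..v} \<beta> \<le> p * ln (v + 1) - p * ln (u + 1)"
proof -
  have "((\<lambda>s. p / (s + 1)) has_integral p * ln (v + 1) - p * ln (u + 1)) {u..v}"
    using assms
    by (intro fundamental_theorem_of_calculus)
       (auto intro!: derivative_eq_intros simp flip: has_real_derivative_iff_has_vector_derivative)
  with assms show ?thesis
    by (intro has_integral_le[OF integrable_integral[OF noninc_integrable_on]]) auto
qed

text \<open>Split \<open>[x, y]\<close> at \<open>m\<close>: \<open>[x, m]\<close> has length at most \<open>A\<close>, so the bound \<open>M\<close> costs
  at most \<open>M A\<close>; on \<open>[m, y]\<close> the tail bound holds unless that interval is degenerate.\<close>
lemma Bint_diff_le:
  assumes M: "\<And>a. 0 \<le> a \<Longrightarrow> \<beta> a \<le> M" "0 \<le> M"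
    and tail: "\<And>s. A \<le> s \<Longrightarrow> \<beta> s \<le> p / (s + 1)" "0 \<le> A" "0 \<le> p"
    and xy: "0 \<le> x" "x \<le> y"
  shows "Bint \<beta> y - Bint \<beta> x \<le> M * A + p * ln ((y + 1) / (x + 1))"
proof -
  define m where "m = min (max x A) y"
  have m: "x \<le> m" "m \<le> y" "m - x \<le> A"
    using xy tail(2) unfolding m_def by auto
  have "integral {x..m} \<beta> \<le> integral {x..m} (\<lambda>_. M)"
    using xy m M by (intro integral_le noninc_integrable_on) auto
  also have "\<dots> \<le> M * A"
    using mult_left_mono[OF m(3) M(2)] m(1) by (simp add: mult.commute)
  finally have head: "integral {x..m} \<beta> \<le> M * A" .
  have rest: "integral {m..y} \<beta> \<le> p * ln (y + 1) - p * ln (m + 1)"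
  proof (cases "m = y")
    case False
    then have "A \<le> m"
      unfolding m_def by auto
    with xy m show ?thesis
      by (intro integral_le_ln_diff tail(1)) auto
  qed simp
  have "p * ln (x + 1) \<le> p * ln (m + 1)"
    using xy m tail(3) by (intro mult_left_mono) auto
  moreover have "integral {x..y} \<beta> = integral {x..m} \<beta> + integral {m..y} \<beta>"
    using xy m by (intro Henstock_Kurzweil_Integration.integral_combine[symmetric] noninc_integrable_on) auto
  ultimately show ?thesis
    using head rest Bint_diff[OF xy] xy by (simp add: ln_div right_diff_distrib)
qed

lemma Wfun_normaliser_le:
  assumes nonneg: "\<And>a. 0 \<le> a \<Longrightarrow> 0 \<le> \<beta> a"
    and "\<mu> \<le> 1" "0 \<le> C \<tau>" and norm: "(Wfun \<beta> \<mu> C \<tau> has_integral 1) {0..<1}"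
  shows "C \<tau> \<le> exp (Bint \<beta> (exp \<tau>))"
proof -
  define c where "c = C \<tau> * exp (- Bint \<beta> (exp \<tau>))"
  have below: "c \<le> Wfun \<beta> \<mu> C \<tau> x" if x: "x \<in> {0..<1}" for x
  proof -
    have "Bint \<beta> (exp \<tau> * x) \<le> Bint \<beta> (exp \<tau>)"
      using Bint_mono[OF nonneg, of "exp \<tau> * x" "exp \<tau>"] x by simp
    moreover have "1 \<le> (1 - x) powr (\<mu> - 1)"
      using powr_mono2'[of "\<mu> - 1" "1 - x" 1] x assms(2) by force
    ultimately have "C \<tau> * exp (- Bint \<beta> (exp \<tau>)) * 1
        \<le> C \<tau> * exp (- Bint \<beta> (exp \<tau> * x)) * (1 - x) powr (\<mu> - 1)"
      using assms(3) by (intro mult_mono) auto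
    then show ?thesis
      unfolding c_def Wfun_def by simp
  qed
  have "((\<lambda>_::real. c) has_integral c) {0..<1}"
    using has_integral_const_real[of c 0 1] by (simp add: has_integral_Ico_iff_Icc)
  then have "c \<le> 1"
    using norm below by (rule has_integral_le)
  then have "c * exp (Bint \<beta> (exp \<tau>)) \<le> exp (Bint \<beta> (exp \<tau>))"
    by simp
  then show ?thesis
    unfolding c_def by (simp add: mult.assoc flip: exp_add)
qed

text \<open>With \<open>\<epsilon> = e\<^sup>-\<^sup>\<tau>\<close>, the logarithmic bound of \<open>Bint_diff_le\<close> involves the ratio
  \<open>(e\<^sup>\<tau> + 1)/(e\<^sup>\<tau> b + 1) = (1 + \<epsilon>)/(\<epsilon> + b) \<le> 2/(\<epsilon> + b)\<close>.\<close>
lemma exp_Bint_increment_le: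
  assumes M: "\<And>a. 0 \<le> a \<Longrightarrow> \<beta> a \<le> M" "0 \<le> M"
    and tail: "\<And>s. A \<le> s \<Longrightarrow> \<beta> s \<le> p / (s + 1)" "0 \<le> A" "0 \<le> p"
    and "0 \<le> \<tau>" "0 \<le> b" "b \<le> 1"
  shows "exp (Bint \<beta> (exp \<tau>) - Bint \<beta> (exp \<tau> * b))
    \<le> exp (M * A) * 2 powr p * (exp (-\<tau>) + b) powr (-p)"
proof -
  define \<epsilon> where "\<epsilon> = exp (-\<tau>)"
  have \<epsilon>: "0 < \<epsilon>" "\<epsilon> \<le> 1" "\<epsilon> * exp \<tau> = 1"
    unfolding \<epsilon>_def using assms by (auto simp: mult_exp_exp)
  have ratio: "(exp \<tau> + 1) / (exp \<tau> * b + 1) = (1 + \<epsilon>) / (\<epsilon> + b)"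
  proof -
    have "(exp \<tau> + 1) / (exp \<tau> * b + 1) = (\<epsilon> * (exp \<tau> + 1)) / (\<epsilon> * (exp \<tau> * b + 1))"
      using \<epsilon> by simp
    also have "\<dots> = (1 + \<epsilon>) / (\<epsilon> + b)"
      using \<epsilon>(3) by (simp add: algebra_simps)
    finally show ?thesis .
  qed
  have "Bint \<beta> (exp \<tau>) - Bint \<beta> (exp \<tau> * b) \<le> M * A + p * ln ((1 + \<epsilon>) / (\<epsilon> + b))"
    using Bint_diff_le[OF M tail, of "exp \<tau> * b" "exp \<tau>"] assms
    by (simp add: ratio mult_le_cancel_left1)
  then have "exp (Bint \<beta> (exp \<tau>) - Bint \<beta> (exp \<tau> * b))
      \<le> exp (M * A) * ((1 + \<epsilon>) / (\<epsilon> + b)) powr p"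
    using \<epsilon> assms by (simp add: powr_def exp_add[symmetric] mult.commute)
  also have "\<dots> \<le> exp (M * A) * (2 / (\<epsilon> + b)) powr p"
    using \<epsilon> assms by (intro mult_left_mono powr_mono2 divide_right_mono) auto
  also have "\<dots> = exp (M * A) * 2 powr p * (\<epsilon> + b) powr (-p)"
    using \<epsilon> assms by (simp add: powr_divide powr_minus_divide)
  finally show ?thesis
    unfolding \<epsilon>_def .
qed

lemma Wfun_le_weight:
  assumes nonneg: "\<And>a. 0 \<le> a \<Longrightarrow> 0 \<le> \<beta> a"
    and "\<mu> \<le> 1" "0 \<le> C \<tau>" "(Wfun \<beta> \<mu> C \<tau> has_integral 1) {0..<1}"
    and M: "\<And>a. 0 \<le> a \<Longrightarrow> \<beta> a \<le> M" "0 \<le> M"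
    and tail: "\<And>s. A \<le> s \<Longrightarrow> \<beta> s \<le> p / (s + 1)" "0 \<le> A" "0 \<le> p"
    and "0 \<le> \<tau>" "0 \<le> b" "b \<le> 1"
  shows "Wfun \<beta> \<mu> C \<tau> b \<le> exp (M * A) * 2 powr p * weight \<mu> p (exp (-\<tau>)) b"
proof -
  have "Wfun \<beta> \<mu> C \<tau> b \<le> exp (Bint \<beta> (exp \<tau>)) * exp (- Bint \<beta> (exp \<tau> * b)) * (1 - b) powr (\<mu> - 1)"
    unfolding Wfun_def using Wfun_normaliser_le[OF assms(1-4)] by (intro mult_right_mono) auto
  also have "\<dots> = exp (Bint \<beta> (exp \<tau>) - Bint \<beta> (exp \<tau> * b)) * (1 - b) powr (\<mu> - 1)"
    by (simp add: exp_diff exp_minus divide_inverse)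
  also have "\<dots> \<le> exp (M * A) * 2 powr p * (exp (-\<tau>) + b) powr (-p) * (1 - b) powr (\<mu> - 1)"
    using exp_Bint_increment_le[OF M tail] assms by (intro mult_right_mono) auto
  finally show ?thesis
    unfolding weight_def by (simp add: ac_simps)
qed

end

lemma Wfun_le_weight_ratio:
  fixes \<beta> C :: "real \<Rightarrow> real"
  assumes p: "0 < \<mu>" "\<mu> < p" "p < 1"
    and pos: "\<And>a. 0 \<le> a \<Longrightarrow> 0 < \<beta> a"
    and bdd: "\<exists>M. \<forall>a\<ge>0. \<beta> a \<le> M"
    and noninc: "\<And>x y. 0 \<le> x \<Longrightarrow> x \<le> y \<Longrightarrow> \<beta> y \<le> \<beta> x"
    and lim: "((\<lambda>a. a * \<beta> a) \<longlongrightarrow> \<mu>) at_top"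
    and Cpos: "\<And>\<tau>. 0 \<le> \<tau> \<Longrightarrow> 0 < C \<tau>"
    and Cnorm: "\<And>\<tau>. 0 \<le> \<tau> \<Longrightarrow> (Wfun \<beta> \<mu> C \<tau> has_integral 1) {0..<1}"
  shows "\<exists>K > 0. \<forall>\<tau> \<ge> 0. \<forall>b \<in> {0..<1}.
    Wfun \<beta> \<mu> C \<tau> b \<le> K * weight \<mu> p (exp (-\<tau>)) b / integral {b..<1} (weight \<mu> p (exp (-\<tau>)))"
proof -
  obtain M where M: "\<And>a. 0 \<le> a \<Longrightarrow> \<beta> a \<le> M"
    using bdd by auto
  have M0: "0 \<le> M"
    using M[of 0] pos[of 0] by simp
  obtain A0 where "\<And>s. A0 \<le> s \<Longrightarrow> \<beta> s < p / (s + 1)"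
    using eventually_less_div_plus_one[OF lim \<open>\<mu> < p\<close>] by (auto simp: eventually_at_top_linorder)
  then have tail: "\<And>s. max A0 0 \<le> s \<Longrightarrow> \<beta> s \<le> p / (s + 1)"
    by (simp add: less_imp_le)
  define K where "K = exp (M * max A0 0) * 2 powr p"
  have "Wfun \<beta> \<mu> C \<tau> b
      \<le> K * Beta (1 - p) \<mu> * weight \<mu> p (exp (-\<tau>)) b / integral {b..<1} (weight \<mu> p (exp (-\<tau>)))"
    if "0 \<le> \<tau>" "b \<in> {0..<1}" for \<tau> b
  proof -
    have "Wfun \<beta> \<mu> C \<tau> b \<le> K * weight \<mu> p (exp (-\<tau>)) b"
      unfolding K_def using Wfun_le_weight[of \<beta>, OF noninc _ _ _ Cnorm M M0 tail] pos Cpos that p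
      by (auto simp: less_imp_le)
    also have "\<dots> \<le> Beta (1 - p) \<mu> * (K * weight \<mu> p (exp (-\<tau>)) b) / integral {b..<1} (weight \<mu> p (exp (-\<tau>)))"
      using that p unfolding K_def
      by (intro le_mult_divide_of_le weight_integral_pos weight_integral_le_Beta)
         (auto simp: weight_def)
    finally show ?thesis
      by (simp add: ac_simps)
  qed
  moreover have "0 < K * Beta (1 - p) \<mu>"
    unfolding K_def using p by (simp add: Beta_real_pos)
  ultimately show ?thesis
    by blast
qed

theorem lemma2:
  fixes \<beta> C :: "real \<Rightarrow> real" and \<mu> :: real
  assumes mu: "0 < \<mu>" "\<mu> < 1"
    and pos: "\<And>a. 0 \<le> a \<Longrightarrow> 0 < \<beta> a"
    and bdd: "\<exists>M. \<forall>a\<ge>0. \<beta> a \<le> M"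
    and noninc: "\<And>x y. 0 \<le> x \<Longrightarrow> x \<le> y \<Longrightarrow> \<beta> y \<le> \<beta> x"
    and lim: "((\<lambda>a. a * \<beta> a) \<longlongrightarrow> \<mu>) at_top"
    and Cpos: "\<And>\<tau>. 0 \<le> \<tau> \<Longrightarrow> 0 < C \<tau>"
    and Cnorm: "\<And>\<tau>. 0 \<le> \<tau> \<Longrightarrow> (Wfun \<beta> \<mu> C \<tau> has_integral 1) {0..<1}"
  shows "\<forall>\<eta>. 0 < \<eta> \<and> \<eta> < min \<mu> (1 - \<mu>) \<longrightarrow>
     (\<exists>C\<^sub>\<eta> > 0. \<forall>\<tau> \<ge> 0. \<forall>b \<in> {0..<1}.
        Wfun \<beta> \<mu> C \<tau> b \<le> C\<^sub>\<eta> * ((1 - b) powr (\<mu> - 1) * (exp (-\<tau>) + b) powr (-(\<mu> + \<eta>)))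
          / integral {b..<1} (\<lambda>b'. (1 - b') powr (\<mu> - 1) * (exp (-\<tau>) + b') powr (-(\<mu> + \<eta>))))"
proof (intro allI impI)
  fix \<eta> :: real
  assume "0 < \<eta> \<and> \<eta> < min \<mu> (1 - \<mu>)"
  then have "0 < \<mu>" "\<mu> < \<mu> + \<eta>" "\<mu> + \<eta> < 1"
    using mu by auto
  from Wfun_le_weight_ratio[OF this pos bdd noninc lim Cpos Cnorm]
  show "\<exists>C\<^sub>\<eta> > 0. \<forall>\<tau> \<ge> 0. \<forall>b \<in> {0..<1}.
      Wfun \<beta> \<mu> C \<tau> b \<le> C\<^sub>\<eta> * ((1 - b) powr (\<mu> - 1) * (exp (-\<tau>) + b) powr (-(\<mu> + \<eta>)))
        / integral {b..<1} (\<lambda>b'. (1 - b') powr (\<mu> - 1) * (exp (-\<tau>) + b') powr (-(\<mu> + \<eta>)))"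
    unfolding weight_def .
qed

end
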